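(* For all positive integers $\rho$ and $v$ (for which $\beta(\rho,v,4)$ is defined), \[ \beta(\rho,v,4) \le \rho\left( (8\rho - 7) + \max\left\{ 12, \left\lfloor \frac{v-4\rho}{3} \right\rfloor \right\} \right). \]
   Context: For integers $v \ge k \ge 2$, a $(v,k)$-packing is a pair $(X,\mathcal{B})$ where $X$ is a set of $v$ points and $\mathcal{B}$ is a set of $k$-subsets of $X$ (blocks) such that every pair of distinct points lies in at most one block. A partial parallel class (PPC) is a set of pairwise disjoint blocks; its size is the number of blocks. A PPC of size $\rho$ is maximum if the packing has no PPC of size $\rho+1$. $\beta(\rho,v,k)$ denotes the maximum number of blocks in a $(v,k)$-packing in which the maximum PPC has size $\rho$. *)

theory Defs
  imports Complex_Main
begin

definition is_packing :: "'a set \<Rightarrow> nat \<Rightarrow> 'a set set \<Rightarrow> bool" where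
  "is_packing X k B \<longleftrightarrow>
     (\<forall>b\<in>B. b \<subseteq> X \<and> card b = k) \<and>
     (\<forall>x\<in>X. \<forall>y\<in>X. x \<noteq> y \<longrightarrow> card {b\<in>B. x \<in> b \<and> y \<in> b} \<le> 1)"

definition is_PPC :: "'a set set \<Rightarrow> 'a set set \<Rightarrow> bool" where
  "is_PPC B P \<longleftrightarrow> P \<subseteq> B \<and> (\<forall>p\<in>P. \<forall>q\<in>P. p \<noteq> q \<longrightarrow> p \<inter> q = {})"

definition max_PPC_size :: "'a set set \<Rightarrow> nat \<Rightarrow> bool" where
  "max_PPC_size B \<rho> \<longleftrightarrow>
     (\<exists>P. is_PPC B P \<and> card P = \<rho>) \<and> \<not> (\<exists>P. is_PPC B P \<and> card P = \<rho> + 1)"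

text \<open>Packings on the point set {0..<v} (every v-set is isomorphic to it).\<close>
definition beta_set :: "nat \<Rightarrow> nat \<Rightarrow> nat \<Rightarrow> nat set" where
  "beta_set \<rho> v k = {card B | B. is_packing {0..<v} k B \<and> max_PPC_size B \<rho>}"

definition beta :: "nat \<Rightarrow> nat \<Rightarrow> nat \<Rightarrow> nat" where
  "beta \<rho> v k = Max (beta_set \<rho> v k)"

end

theory Submission
  imports Defs
begin

(* Fix a maximum partial parallel class P of size \<rho> and let U be the 4\<rho> points it covers.
   By maximality every other block meets U. A block meeting two blocks of P contains a pair of
   points from different blocks of P, and no such pair lies in two blocks; there are
   C(4\<rho>,2) - 6\<rho> = 8\<rho>(\<rho> - 1) such pairs. The blocks meeting U only inside one p \<in> P meet p in
   exactly one point and pairwise intersect, since two disjoint ones could replace p in P.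
   If they all pass through the same point of p, their remaining triples are disjoint subsets
   of the v - 4\<rho> points outside U; otherwise a block avoiding a given point of p meets each
   block through that point in a distinct point, so each of the 4 points of p lies on at most
   3 of them. Altogether |B| \<le> \<rho> + 8\<rho>(\<rho> - 1) + \<rho> max(12, (v - 4\<rho>) div 3). *)

lemma packing_block:
  assumes "is_packing X k B" "finite X" "b \<in> B"
  shows "b \<subseteq> X" "finite b" "card b = k"
proof -
  show "b \<subseteq> X" "card b = k"
    using assms(1,3) unfolding is_packing_def by auto
  then show "finite b"
    using assms(2) finite_subset by blast
qed

lemma packing_finite:
  assumes "is_packing X k B" "finite X"
  shows "finite B"
proof -
  have "B \<subseteq> Pow X"
    using assms(1) unfolding is_packing_def by auto
  then show ?thesis
    using assms(2) by (simp add: finite_subset)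
qed

lemma packing_block_eq:
  assumes "is_packing X k B" "finite B" "b \<in> B" "b' \<in> B" "x \<in> b \<inter> b'" "y \<in> b \<inter> b'" "x \<noteq> y"
  shows "b = b'"
proof -
  have "x \<in> X" "y \<in> X"
    using assms unfolding is_packing_def by auto
  then have "card {c\<in>B. x \<in> c \<and> y \<in> c} \<le> 1"
    using assms(1,7) unfolding is_packing_def by blast
  moreover have "card {b, b'} \<le> card {c\<in>B. x \<in> c \<and> y \<in> c}"
    using assms by (intro card_mono) auto
  ultimately have "card {b, b'} \<le> 1"
    by linarith
  then show ?thesis
    by (cases "b = b'") auto
qed

lemma packing_Int_singleton:
  assumes "is_packing X k B" "finite B" "b \<in> B" "b' \<in> B" "b \<noteq> b'" "b \<inter> b' \<noteq> {}"
  shows "\<exists>x. b \<inter> b' = {x}"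
proof -
  obtain x where "x \<in> b \<inter> b'"
    using assms(6) by blast
  moreover have "y = x" if "y \<in> b \<inter> b'" for y
    using packing_block_eq[OF assms(1-4) that] \<open>x \<in> b \<inter> b'\<close> assms(5) by blast
  ultimately show ?thesis
    by blast
qed

lemma packing_card_le_pairs:
  assumes "is_packing X k B" "finite B" "N \<subseteq> B" "finite E"
    and pairs: "\<forall>e\<in>E. card e = 2" and covered: "\<forall>b\<in>N. \<exists>e\<in>E. e \<subseteq> b"
  shows "card N \<le> card E"
proof -
  define pair where "pair b = (SOME e. e \<in> E \<and> e \<subseteq> b)" for b
  have pair: "pair b \<in> E \<and> pair b \<subseteq> b" if "b \<in> N" for b
    unfolding pair_def using covered that by (metis (mono_tags, lifting) someI_ex)
  have "inj_on pair N"
  proof (rule inj_onI)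
    fix b b' assume "b \<in> N" "b' \<in> N" "pair b = pair b'"
    moreover obtain x y where "pair b = {x, y}" "x \<noteq> y"
      using pair[OF \<open>b \<in> N\<close>] pairs by (meson card_2_iff)
    ultimately show "b = b'"
      using pair packing_block_eq[OF assms(1,2), of b b' x y] assms(3) by (metis Int_iff insert_subset subsetD)
  qed
  then show ?thesis
    using card_inj_on_le pair assms(4) by (metis image_subsetI)
qed

lemma is_PPC_iff: "is_PPC B P \<longleftrightarrow> P \<subseteq> B \<and> pairwise disjnt P"
  by (auto simp: is_PPC_def pairwise_def disjnt_def)

lemma is_PPC_subset: "is_PPC B P \<Longrightarrow> Q \<subseteq> P \<Longrightarrow> is_PPC B Q"
  unfolding is_PPC_def by blast

lemma is_PPC_insert: "is_PPC B P \<Longrightarrow> b \<in> B \<Longrightarrow> b \<inter> \<Union>P = {} \<Longrightarrow> is_PPC B (insert b P)"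
  by (auto simp: is_PPC_def)

lemma card_Union_PPC:
  assumes "is_packing X k B" "finite X" "is_PPC B P"
  shows "card (\<Union>P) = k * card P"
proof -
  have "P \<subseteq> B" "pairwise disjnt P"
    using assms(3) by (auto simp: is_PPC_iff)
  then show ?thesis
    using packing_block[OF assms(1,2)] by (simp add: card_Union_disjoint subset_iff)
qed

definition maximum_PPC :: "'a set set \<Rightarrow> 'a set set \<Rightarrow> bool" where
  "maximum_PPC B P \<longleftrightarrow> is_PPC B P \<and> finite P \<and> (\<nexists>Q. is_PPC B Q \<and> card Q = card P + 1)"

lemma max_PPC_size_obtains_maximum_PPC:
  assumes "max_PPC_size B \<rho>" "finite B"
  obtains P where "maximum_PPC B P" "card P = \<rho>"
  using assms unfolding max_PPC_size_def maximum_PPC_def is_PPC_def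
  by (metis finite_subset)

lemma maximum_PPC_meets_Union:
  assumes "maximum_PPC B P" "b \<in> B - P"
  shows "b \<inter> \<Union>P \<noteq> {}"
proof
  assume "b \<inter> \<Union>P = {}"
  then have "is_PPC B (insert b P)"
    using assms is_PPC_insert unfolding maximum_PPC_def by blast
  moreover have "card (insert b P) = card P + 1"
    using assms unfolding maximum_PPC_def by simp
  ultimately show False
    using assms(1) unfolding maximum_PPC_def by blast
qed

lemma maximum_PPC_exchange:
  assumes max: "maximum_PPC B P" and "p \<in> P" "b \<in> B - P" "b' \<in> B - P" "b \<noteq> b'"
    and "b \<inter> \<Union>P \<subseteq> p" "b' \<inter> \<Union>P \<subseteq> p"
  shows "b \<inter> b' \<noteq> {}"
proof
  assume disj: "b \<inter> b' = {}"
  have PPC: "is_PPC B P" and fin: "finite P"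
    using max unfolding maximum_PPC_def by auto
  have "p \<inter> q = {}" if "q \<in> P - {p}" for q
    using PPC \<open>p \<in> P\<close> that unfolding is_PPC_def by blast
  then have "b \<inter> \<Union>(P - {p}) = {}" "b' \<inter> \<Union>(P - {p}) = {}"
    using assms(6,7) by blast+
  then have "is_PPC B (insert b (insert b' (P - {p})))"
    using PPC assms(3,4) disj by (intro is_PPC_insert is_PPC_subset[OF PPC]) auto
  moreover have "card (insert b (insert b' (P - {p}))) = card P + 1"
    using assms(2-5) fin card_Suc_Diff1[OF fin \<open>p \<in> P\<close>] by simp
  ultimately show False
    using max unfolding maximum_PPC_def by blast
qed

lemma card_disjoint_family_le:
  assumes "finite W" and sub: "\<forall>i\<in>I. A i \<subseteq> W \<and> card (A i) = m"
    and disj: "\<forall>i\<in>I. \<forall>j\<in>I. i \<noteq> j \<longrightarrow> A i \<inter> A j = {}"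
  shows "m * card I \<le> card W"
proof (cases "finite I")
  case True
  have "m * card I = card (\<Union>i\<in>I. A i)"
    using True sub disj \<open>finite W\<close> by (subst card_UN_disjoint) (auto intro: finite_subset)
  also have "\<dots> \<le> card W"
    using sub \<open>finite W\<close> by (intro card_mono) auto
  finally show ?thesis .
qed simp

definition cross_pairs :: "'a set set \<Rightarrow> 'a set set" where
  "cross_pairs P = {e. e \<subseteq> \<Union>P \<and> card e = 2 \<and> (\<forall>p\<in>P. \<not> e \<subseteq> p)}"

lemma card_cross_pairs:
  assumes "finite P" "pairwise disjnt P" and blocks: "\<forall>p\<in>P. finite p \<and> card p = k"
  shows "card (cross_pairs P) = (k * card P choose 2) - card P * (k choose 2)"
proof -
  define inner where "inner = (\<Union>p\<in>P. {e. e \<subseteq> p \<and> card e = 2})"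
  have finU: "finite (\<Union>P)"
    using assms by auto
  have "card (\<Union>P) = k * card P"
    using assms by (simp add: card_Union_disjoint)
  then have "card {e. e \<subseteq> \<Union>P \<and> card e = 2} = (k * card P choose 2)"
    using n_subsets[OF finU] by simp
  moreover have "{e. e \<subseteq> \<Union>P \<and> card e = 2} = cross_pairs P \<union> inner"
    unfolding cross_pairs_def inner_def by blast
  moreover have "cross_pairs P \<inter> inner = {}"
    unfolding cross_pairs_def inner_def by blast
  moreover have "card inner = card P * (k choose 2)"
  proof -
    have "{e. e \<subseteq> p \<and> card e = 2} \<inter> {e. e \<subseteq> q \<and> card e = 2} = {}"
      if "p \<in> P" "q \<in> P" "p \<noteq> q" for p q
    proof -
      have "p \<inter> q = {}"
        using assms(2) that unfolding pairwise_def disjnt_def by blast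
      then show ?thesis
        by (auto simp: card_2_iff)
    qed
    then show ?thesis
      unfolding inner_def using assms by (subst card_UN_disjoint) (auto simp: n_subsets)
  qed
  moreover have "finite (cross_pairs P)" "finite inner"
    unfolding cross_pairs_def inner_def by (auto intro!: finite_subset[of _ "Pow (\<Union>P)"] simp: finU)
  ultimately show ?thesis
    by (metis card_Un_disjoint diff_add_inverse2)
qed

lemma card_blocks_through_point_le:
  assumes meet_p: "\<forall>b\<in>F. \<exists>x. b \<inter> p = {x}"
    and meet: "\<forall>b\<in>F. \<forall>b'\<in>F. b \<noteq> b' \<longrightarrow> (\<exists>y. b \<inter> b' = {y})"
    and "z \<in> p" "c \<in> F" "z \<notin> c" "finite (c - p)"
  shows "card {b\<in>F. z \<in> b} \<le> card (c - p)"
proof -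
  have point: "the_elem (b \<inter> c) \<in> b \<inter> c - p" if b: "b \<in> F" "z \<in> b" for b
  proof -
    have "b \<noteq> c"
      using b assms(5) by auto
    then obtain y where y: "b \<inter> c = {y}"
      using meet b(1) assms(4) by blast
    obtain x where "b \<inter> p = {x}"
      using meet_p b(1) by blast
    then have "y \<notin> p"
      using y b(2) assms(3,5) by (metis Int_iff insertI1 singletonD)
    then show ?thesis
      using y by simp
  qed
  have "inj_on (\<lambda>b. the_elem (b \<inter> c)) {b\<in>F. z \<in> b}"
  proof (rule inj_onI)
    fix b b' assume b: "b \<in> {b\<in>F. z \<in> b}" "b' \<in> {b\<in>F. z \<in> b}"
      and same: "the_elem (b \<inter> c) = the_elem (b' \<inter> c)"
    show "b = b'"
    proof (rule ccontr)
      assume "b \<noteq> b'"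
      then obtain y where "b \<inter> b' = {y}"
        using meet b by blast
      moreover have "the_elem (b \<inter> c) \<in> b \<inter> b' - p"
        using point[of b] point[of b'] b same by auto
      moreover have "z \<in> b \<inter> b'"
        using b by simp
      ultimately show False
        using assms(3) by (metis Diff_iff singletonD)
    qed
  qed
  then show ?thesis
    using point assms(6) by (intro card_inj_on_le) auto
qed

lemma card_family_meeting_distinct_points_le:
  assumes "finite p"
    and blocks: "\<forall>b\<in>F. finite b \<and> (\<exists>x. b \<inter> p = {x}) \<and> card (b - p) = m"
    and meet: "\<forall>b\<in>F. \<forall>b'\<in>F. b \<noteq> b' \<longrightarrow> (\<exists>y. b \<inter> b' = {y})"
    and "b1 \<in> F" "b2 \<in> F" "b1 \<inter> p \<noteq> b2 \<inter> p"
  shows "card F \<le> card p * m"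
proof -
  have through_point: "card {b\<in>F. z \<in> b} \<le> m" if z: "z \<in> p" for z
  proof -
    obtain x1 x2 where "b1 \<inter> p = {x1}" "b2 \<inter> p = {x2}"
      using blocks assms(4,5) by meson
    then have "z \<notin> b1 \<or> z \<notin> b2"
      using assms(6) z by auto
    then obtain c where "c \<in> F" "z \<notin> c"
      using assms(4,5) by blast
    then show ?thesis
      using card_blocks_through_point_le[of F p z c] blocks meet z by auto
  qed
  have "F = (\<Union>z\<in>p. {b\<in>F. z \<in> b})"
    using blocks by (auto simp: set_eq_iff)
  then have "card F \<le> (\<Sum>z\<in>p. card {b\<in>F. z \<in> b})"
    by (metis card_UN_le \<open>finite p\<close>)
  also have "\<dots> \<le> card p * m"
    using sum_mono[of p _ "\<lambda>_. m"] through_point by simp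
  finally show ?thesis .
qed

lemma card_pairwise_intersecting_family_le:
  assumes "finite p" "finite W" "0 < m"
    and blocks: "\<forall>b\<in>F. finite b \<and> (\<exists>x. b \<inter> p = {x}) \<and> b - p \<subseteq> W \<and> card (b - p) = m"
    and meet: "\<forall>b\<in>F. \<forall>b'\<in>F. b \<noteq> b' \<longrightarrow> (\<exists>y. b \<inter> b' = {y})"
  shows "card F \<le> max (card p * m) (card W div m)"
proof (cases "\<exists>b1\<in>F. \<exists>b2\<in>F. b1 \<inter> p \<noteq> b2 \<inter> p")
  case True
  then obtain b1 b2 where "b1 \<in> F" "b2 \<in> F" "b1 \<inter> p \<noteq> b2 \<inter> p"
    by blast
  then have "card F \<le> card p * m"
    using card_family_meeting_distinct_points_le[OF \<open>finite p\<close>] blocks meet by blast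
  then show ?thesis
    by simp
next
  case False
  have "(b - p) \<inter> (b' - p) = {}" if bb': "b \<in> F" "b' \<in> F" "b \<noteq> b'" for b b'
  proof -
    obtain x y where x: "b \<inter> p = {x}" and "b \<inter> b' = {y}"
      using blocks meet bb' by meson
    moreover have "b' \<inter> p = b \<inter> p"
      using False bb' by blast
    ultimately have "b \<inter> b' = {x}"
      by (metis Int_iff insertI1 singletonD)
    then show ?thesis
      using x by auto
  qed
  then have "m * card F \<le> card W"
    using card_disjoint_family_le[OF \<open>finite W\<close>, of F "\<lambda>b. b - p" m] blocks by blast
  then have "card F \<le> card W div m"
    using \<open>0 < m\<close> by (simp add: less_eq_div_iff_mult_less_eq mult.commute)
  then show ?thesis
    by simp
qed

lemma card_blocks_across_PPC_le:
  assumes pk: "is_packing X k B" "finite X" and max: "maximum_PPC B P"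
  shows "card {b \<in> B - P. \<forall>p\<in>P. \<not> b \<inter> \<Union>P \<subseteq> p} \<le> card (cross_pairs P)"
proof (rule packing_card_le_pairs[OF pk(1) packing_finite[OF pk]])
  have PPC: "P \<subseteq> B" "pairwise disjnt P"
    using max by (auto simp: maximum_PPC_def is_PPC_iff)
  then have "\<Union>P \<subseteq> X"
    using packing_block[OF pk] by blast
  then have "finite (\<Union>P)"
    using pk(2) by (rule finite_subset)
  then show "finite (cross_pairs P)"
    unfolding cross_pairs_def by (auto intro!: finite_subset[of _ "Pow (\<Union>P)"])
  show "\<forall>e\<in>cross_pairs P. card e = 2"
    by (simp add: cross_pairs_def)
  show "\<forall>b\<in>{b \<in> B - P. \<forall>p\<in>P. \<not> b \<inter> \<Union>P \<subseteq> p}. \<exists>e\<in>cross_pairs P. e \<subseteq> b"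
  proof
    fix b assume b: "b \<in> {b \<in> B - P. \<forall>p\<in>P. \<not> b \<inter> \<Union>P \<subseteq> p}"
    obtain x p where x: "x \<in> b" "x \<in> p" "p \<in> P"
      using maximum_PPC_meets_Union[OF max] b by blast
    obtain y where y: "y \<in> b" "y \<in> \<Union>P" "y \<notin> p"
      using b x(3) by blast
    have "\<not> {x, y} \<subseteq> q" if "q \<in> P" for q
      using PPC(2) x(2,3) y(3) that unfolding pairwise_def disjnt_def by blast
    moreover have "x \<noteq> y"
      using x(2) y(3) by blast
    ultimately have "{x, y} \<in> cross_pairs P"
      using x y unfolding cross_pairs_def by auto
    then show "\<exists>e\<in>cross_pairs P. e \<subseteq> b"
      using x(1) y(1) by (intro bexI[of _ "{x, y}"]) auto
  qed
qed simp

lemma card_blocks_within_PPC_block_le: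
  assumes pk: "is_packing X k B" "finite X" and "2 \<le> k" and max: "maximum_PPC B P" and "p \<in> P"
  shows "card {b \<in> B - P. b \<inter> \<Union>P \<subseteq> p} \<le> max (k * (k - 1)) ((card X - k * card P) div (k - 1))"
proof -
  define F where "F = {b \<in> B - P. b \<inter> \<Union>P \<subseteq> p}"
  define W where "W = X - \<Union>P"
  have finB: "finite B"
    using packing_finite[OF pk] .
  have PPC: "is_PPC B P" "P \<subseteq> B"
    using max by (auto simp: maximum_PPC_def is_PPC_def)
  have UX: "\<Union>P \<subseteq> X"
    using PPC(2) packing_block[OF pk] by blast
  then have "card W = card X - k * card P"
    unfolding W_def using card_Union_PPC[OF pk PPC(1)] pk(2)
    by (metis card_Diff_subset finite_subset)
  have p: "p \<in> B" "finite p" "card p = k"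
    using PPC(2) \<open>p \<in> P\<close> packing_block[OF pk] by auto
  have blocks: "\<forall>b\<in>F. finite b \<and> (\<exists>x. b \<inter> p = {x}) \<and> b - p \<subseteq> W \<and> card (b - p) = k - 1"
  proof
    fix b assume "b \<in> F"
    then have b: "b \<in> B" "b \<notin> P" "b \<inter> \<Union>P \<subseteq> p"
      unfolding F_def by auto
    then have "b \<inter> p \<noteq> {}"
      using maximum_PPC_meets_Union[OF max] by blast
    then obtain x where x: "b \<inter> p = {x}"
      using packing_Int_singleton[OF pk(1) finB b(1) p(1)] b(2) \<open>p \<in> P\<close> by blast
    have "b - p \<subseteq> W"
      using b(3) packing_block[OF pk b(1)] unfolding W_def by blast
    moreover have "card (b - p) = k - 1"
      using x packing_block[OF pk b(1)] by (simp add: card_Diff_subset_Int)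
    ultimately show "finite b \<and> (\<exists>x. b \<inter> p = {x}) \<and> b - p \<subseteq> W \<and> card (b - p) = k - 1"
      using x packing_block[OF pk b(1)] by blast
  qed
  have meet: "\<forall>b\<in>F. \<forall>b'\<in>F. b \<noteq> b' \<longrightarrow> (\<exists>y. b \<inter> b' = {y})"
    unfolding F_def using maximum_PPC_exchange[OF max \<open>p \<in> P\<close>] packing_Int_singleton[OF pk(1) finB]
    by blast
  have "card F \<le> max (card p * (k - 1)) (card W div (k - 1))"
    using card_pairwise_intersecting_family_le[OF p(2) _ _ blocks meet] \<open>2 \<le> k\<close> pk(2)
    unfolding W_def by simp
  then show ?thesis
    unfolding F_def using p(3) \<open>card W = card X - k * card P\<close> by simp
qed

theorem card_packing_le:
  assumes pk: "is_packing X k B" "finite X" and "2 \<le> k" and max: "maximum_PPC B P"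
  shows "card B \<le> card P + ((k * card P choose 2) - card P * (k choose 2))
                   + card P * max (k * (k - 1)) ((card X - k * card P) div (k - 1))"
proof -
  define M where "M = max (k * (k - 1)) ((card X - k * card P) div (k - 1))"
  define N where "N = {b \<in> B - P. \<forall>p\<in>P. \<not> b \<inter> \<Union>P \<subseteq> p}"
  define F where "F p = {b \<in> B - P. b \<inter> \<Union>P \<subseteq> p}" for p
  have finB: "finite B"
    using packing_finite[OF pk] .
  have P: "finite P" "P \<subseteq> B" "pairwise disjnt P"
    using max by (auto simp: maximum_PPC_def is_PPC_iff)
  have "B \<subseteq> P \<union> N \<union> (\<Union>p\<in>P. F p)"
    unfolding N_def F_def by blast
  moreover have "P \<union> N \<union> (\<Union>p\<in>P. F p) \<subseteq> B"
    using P(2) unfolding N_def F_def by blast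
  then have "finite (P \<union> N \<union> (\<Union>p\<in>P. F p))"
    using finB finite_subset by blast
  ultimately have "card B \<le> card (P \<union> N \<union> (\<Union>p\<in>P. F p))"
    by (rule card_mono[rotated])
  also have "\<dots> \<le> card P + card N + card (\<Union>p\<in>P. F p)"
    by (meson add_le_mono1 card_Un_le le_trans)
  also have "card N \<le> (k * card P choose 2) - card P * (k choose 2)"
  proof -
    have "\<forall>p\<in>P. finite p \<and> card p = k"
      using P(2) packing_block[OF pk] by blast
    then show ?thesis
      using card_blocks_across_PPC_le[OF pk max] card_cross_pairs[OF P(1,3), of k] unfolding N_def by simp
  qed
  also have "card (\<Union>p\<in>P. F p) \<le> (\<Sum>p\<in>P. card (F p))"
    using card_UN_le[OF P(1)] .
  also have "\<dots> \<le> card P * M"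
    using sum_mono[of P "\<lambda>p. card (F p)" "\<lambda>_. M"]
      card_blocks_within_PPC_block_le[OF pk \<open>2 \<le> k\<close> max] unfolding F_def M_def by simp
  finally show ?thesis
    unfolding M_def by simp
qed

lemma finite_beta_set: "finite (beta_set \<rho> v k)"
proof -
  have "B \<in> Pow (Pow {0..<v})" if "is_packing {0..<v} k B" for B :: "nat set set"
    using that unfolding is_packing_def by auto
  then have "beta_set \<rho> v k \<subseteq> card ` Pow (Pow {0..<v})"
    unfolding beta_set_def by blast
  then show ?thesis
    by (rule finite_subset) simp
qed

lemma max_floor_diff_div_eq:
  fixes a b c d :: nat
  assumes "0 < d"
  shows "max (int c) \<lfloor>(real a - real b) / real d\<rfloor> = int (max c ((a - b) div d))"
proof (cases "b \<le> a")
  case True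
  then have "\<lfloor>(real a - real b) / real d\<rfloor> = int ((a - b) div d)"
    using floor_divide_of_nat_eq[of "a - b" d] by (simp add: of_nat_diff)
  then show ?thesis
    by simp
next
  case False
  then have "(real a - real b) / real d < 0"
    using assms by (simp add: divide_less_0_iff)
  then have "\<lfloor>(real a - real b) / real d\<rfloor> \<le> int c"
    by (simp add: floor_le_iff)
  then show ?thesis
    using False by (simp add: max_absorb1)
qed

lemma four_mult_choose_two_diff: "(4 * n choose 2) - n * (4 choose 2) = 8 * n * (n - 1)"
proof -
  have "4 * n choose 2 = 2 * n * (4 * n - 1)"
    by (simp add: choose_two)
  also have "\<dots> = n * (4 choose 2) + 8 * n * (n - 1)"
    by (cases n) (simp_all add: algebra_simps choose_two)
  finally show ?thesis
    by simp
qed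

theorem theorem3p2:
  fixes \<rho> v :: nat
  assumes "\<rho> > 0" and "v > 0" and "beta_set \<rho> v 4 \<noteq> {}"
  shows "int (beta \<rho> v 4) \<le>
           int \<rho> * ((8 * int \<rho> - 7) + max 12 \<lfloor>(real v - 4 * real \<rho>) / 3\<rfloor>)"
proof -
  have "beta \<rho> v 4 \<in> beta_set \<rho> v 4"
    unfolding beta_def using finite_beta_set assms(3) by (rule Max_in)
  then obtain B :: "nat set set"
    where B: "beta \<rho> v 4 = card B" "is_packing {0..<v} 4 B" "max_PPC_size B \<rho>"
    unfolding beta_set_def by blast
  obtain P where P: "maximum_PPC B P" "card P = \<rho>"
    using max_PPC_size_obtains_maximum_PPC[OF B(3) packing_finite[OF B(2)]] by blast
  define M where "M = max 12 ((v - 4 * \<rho>) div 3)"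
  have "beta \<rho> v 4 \<le> \<rho> + 8 * \<rho> * (\<rho> - 1) + \<rho> * M"
    using card_packing_le[OF B(2) finite_atLeastLessThan _ P(1)] B(1) P(2)
    unfolding M_def four_mult_choose_two_diff by simp
  moreover have "int (\<rho> + 8 * \<rho> * (\<rho> - 1) + \<rho> * M) = int \<rho> * (8 * int \<rho> - 7 + int M)"
    by (cases \<rho>) (simp_all add: algebra_simps)
  moreover have "max 12 \<lfloor>(real v - 4 * real \<rho>) / 3\<rfloor> = int M"
    using max_floor_diff_div_eq[of 3 12 v "4 * \<rho>"] unfolding M_def by simp
  ultimately show ?thesis
    by (metis of_nat_le_iff)
qed

end
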